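(* Let $r\ge0$ and $\delta\ge0$, and let $\overline{D}_\delta=\{z\in\mathbb{C}:|z|\le\delta\}$. Then $f_{c_2}\circ f_{c_1}(\overline{D}_\delta)\subset\overline{D}_\delta$ for every $c_1,c_2\in\overline{B}(-1,r)=\{c'\in\mathbb{C}:|c'+1|\le r\}$ if and only if $\delta^4+2(1+r)\delta^2+r^2+3r\le\delta$.
   Context: $f_c(z)=z^2+c$ for $c\in\mathbb{C}$. *)

theory Defs
  imports "HOL-Analysis.Analysis"
begin

definition qpoly :: "complex \<Rightarrow> complex \<Rightarrow> complex" where
  "qpoly c z = z^2 + c"

end

theory Submission
  imports Defs
begin

(* With u = z^2 + c1 + 1 one has f_c2 (f_c1 z) = u^2 - 2u + (c2 + 1), so the triangle inequality
   bounds |f_c2 (f_c1 z)| by (delta^2 + r)^2 + 2 (delta^2 + r) + r, which is the left-hand side of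
   the criterion. The bound is attained at z = i delta, c1 = -1 - r, c2 = -1 + r, where u = -(delta^2 + r)
   and all three terms are nonnegative reals. *)

lemma qpoly_qpoly_eq:
  "(qpoly c2 \<circ> qpoly c1) z = (z^2 + (c1 + 1))^2 - 2 * (z^2 + (c1 + 1)) + (c2 + 1)"
  by (simp add: qpoly_def algebra_simps power2_eq_square)

lemma norm_qpoly_qpoly_le:
  fixes r \<delta> :: real
  assumes "c1 \<in> cball (-1) r" "c2 \<in> cball (-1) r" "z \<in> cball 0 \<delta>"
  shows "norm ((qpoly c2 \<circ> qpoly c1) z) \<le> \<delta>^4 + 2*(1+r)*\<delta>^2 + r^2 + 3*r"
proof -
  define u where "u = z^2 + (c1 + 1)"
  have c1: "norm (c1 + 1) \<le> r" and c2: "norm (c2 + 1) \<le> r" and z: "norm z \<le> \<delta>"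
    using assms by (auto simp: dist_norm norm_minus_commute)
  have "norm (z^2) \<le> \<delta>^2"
    using z by (simp add: norm_power power_mono)
  then have u: "norm u \<le> \<delta>^2 + r"
    unfolding u_def using c1 by (meson add_mono norm_triangle_le)
  have "norm ((qpoly c2 \<circ> qpoly c1) z) = norm (u^2 - 2*u + (c2 + 1))"
    by (simp only: qpoly_qpoly_eq u_def)
  also have "\<dots> \<le> norm (u^2) + norm (2*u) + norm (c2 + 1)"
    by (metis norm_triangle_ineq4 norm_triangle_le add_mono order_refl norm_triangle_ineq)
  also have "\<dots> = (norm u)^2 + 2 * norm u + norm (c2 + 1)"
    by (simp add: norm_power norm_mult)
  also have "\<dots> \<le> (\<delta>^2 + r)^2 + 2*(\<delta>^2 + r) + r"
    using u c2 by (intro add_mono power_mono) auto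
  also have "\<dots> = \<delta>^4 + 2*(1+r)*\<delta>^2 + r^2 + 3*r"
    by (simp add: algebra_simps power2_eq_square power4_eq_xxxx)
  finally show ?thesis .
qed

lemma qpoly_qpoly_extremal:
  fixes r \<delta> :: real
  shows "(qpoly (of_real (r - 1)) \<circ> qpoly (of_real (-1 - r))) (\<i> * of_real \<delta>)
           = of_real (\<delta>^4 + 2*(1+r)*\<delta>^2 + r^2 + 3*r)"
  by (simp add: qpoly_def algebra_simps power2_eq_square power4_eq_xxxx)

theorem lemma4p16:
  fixes r \<delta> :: real
  assumes "r \<ge> 0" and "\<delta> \<ge> 0"
  shows "(\<forall>c1 \<in> cball (-1) r. \<forall>c2 \<in> cball (-1) r.
            (qpoly c2 \<circ> qpoly c1) ` cball 0 \<delta> \<subseteq> cball 0 \<delta>)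
         \<longleftrightarrow> \<delta>^4 + 2*(1+r)*\<delta>^2 + r^2 + 3*r \<le> \<delta>"
    (is "?invariant \<longleftrightarrow> ?M \<le> \<delta>")
proof
  assume invariant: ?invariant
  have "complex_of_real (-1 - r) \<in> cball (-1) r" "complex_of_real (r - 1) \<in> cball (-1) r"
    "\<i> * of_real \<delta> \<in> cball 0 \<delta>"
    using assms by (simp_all add: dist_norm norm_mult)
  with invariant have "(qpoly (of_real (r - 1)) \<circ> qpoly (of_real (-1 - r))) (\<i> * of_real \<delta>)
      \<in> cball 0 \<delta>"
    by blast
  then have "norm (complex_of_real ?M) \<le> \<delta>"
    by (simp only: qpoly_qpoly_extremal mem_cball_0)
  moreover have "?M \<ge> 0"
    using assms by simp
  ultimately show "?M \<le> \<delta>"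
    by (metis abs_of_nonneg norm_of_real)
next
  assume "?M \<le> \<delta>"
  then have "norm ((qpoly c2 \<circ> qpoly c1) z) \<le> \<delta>"
    if "c1 \<in> cball (-1) r" "c2 \<in> cball (-1) r" "z \<in> cball 0 \<delta>" for c1 c2 z
    using norm_qpoly_qpoly_le[OF that] by linarith
  then show ?invariant
    by auto
qed

end
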